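(* Let $n,k,m\ge1$ be integers, and let $r_0<r_1<\dots<r_{k-1}$ and $s_0<s_1<\dots<s_{k-1}$ be integers in $\{1,\dots,k+m\}$. Let $\bar r_0<\dots<\bar r_{m-1}$ and $\bar s_0<\dots<\bar s_{m-1}$ be the elements of $\{1,\dots,k+m\}\setminus\{r_0,\dots,r_{k-1}\}$ and $\{1,\dots,k+m\}\setminus\{s_0,\dots,s_{k-1}\}$ respectively. Then $$\det\Big(C_{2n-1}^{(2k+2m-1)}(2r_i-2\to2s_j-1)\Big)_{0\le i,j\le k-1}=(-1)^{\sum_{i=0}^{m-1}(\bar r_i+\bar s_i)}\det\Big(C_{-2n+1}^{(2k+2m-1)}(2\bar r_i-2\to2\bar s_j-1)\Big)_{0\le i,j\le m-1}.$$
   Context: For $N\ge0$ and $0\le r,s\le K$, $C_N^{(K)}(r\to s)$ is the number of lattice paths with steps $(1,1),(1,-1)$ from $(0,r)$ to $(N,s)$ never below the $x$-axis nor above $y=K$. For odd $K$, $F(x)=\sum_{N\ge0}C_N^{(K)}(r\to s)x^N$ is a rational function $p/q$ with $\deg p<\deg q$, $q(0)\ne0$, and for negative $N$ one defines $C_N^{(K)}(r\to s)$ by $\sum_{N\ge1}C_{-N}^{(K)}(r\to s)x^N=-F(1/x)$ (equivalently by running the linear recurrence backwards). *)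

theory Defs
  imports "HOL-Computational_Algebra.Polynomial_FPS" "Jordan_Normal_Form.Determinant"
begin

text \<open>Number of lattice paths with steps (1,1),(1,-1) from (0,r) to (N,s) staying in the
  strip 0 <= y <= K.  A path is encoded by its list of heights y_0,...,y_N (natural numbers,
  hence never below the x-axis).\<close>
definition paths_count :: "nat \<Rightarrow> nat \<Rightarrow> nat \<Rightarrow> nat \<Rightarrow> nat" where
  "paths_count K N r s = card {ys :: nat list. length ys = Suc N \<and> ys ! 0 = r \<and> ys ! N = s \<and>
      (\<forall>y\<in>set ys. y \<le> K) \<and>
      (\<forall>i<N. ys ! (Suc i) = ys ! i + 1 \<or> ys ! i = ys ! (Suc i) + 1)}"

definition path_gf :: "nat \<Rightarrow> nat \<Rightarrow> nat \<Rightarrow> real fps" where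
  "path_gf K r s = Abs_fps (\<lambda>N. real (paths_count K N r s))"

text \<open>A representation F = p/q with deg p < deg q and q(0) \<noteq> 0 (exists for odd K).\<close>
definition rat_rep :: "nat \<Rightarrow> nat \<Rightarrow> nat \<Rightarrow> real poly \<times> real poly" where
  "rat_rep K r s = (SOME (p, q). poly q 0 \<noteq> 0 \<and> degree p < degree q \<and>
      fps_of_poly q * path_gf K r s = fps_of_poly p)"

text \<open>The power series -F(1/x) = -(x^(deg q - deg p) * reflect p) / reflect q, where
  reflect q = x^(deg q) q(1/x).\<close>
definition neg_gf :: "nat \<Rightarrow> nat \<Rightarrow> nat \<Rightarrow> real fps" where
  "neg_gf K r s = (case rat_rep K r s of (p, q) \<Rightarrow>
      - fps_of_poly (monom 1 (degree q - degree p) * reflect_poly p) / fps_of_poly (reflect_poly q))"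

definition C :: "nat \<Rightarrow> int \<Rightarrow> nat \<Rightarrow> nat \<Rightarrow> real" where
  "C K N r s = (if 0 \<le> N then real (paths_count K (nat N) r s)
                else fps_nth (neg_gf K r s) (nat (- N)))"

end

theory Submission
  imports Defs
begin

text \<open>Let $D = K + 1 = 2(k + m)$ and let $A$ be the adjacency matrix of the path with $D$ vertices.
  For $N \<ge> 0$ the path counts are the entries of $A^N$. Since $D$ is even, $A$ is invertible,
  and the entries of all integer powers of $A$ satisfy the linear recurrence given by its
  characteristic polynomial (a Chebyshev polynomial); hence the continuation of the counts to
  negative $N$ through $-F(1/x)$ consists of the entries of $A^{-|N|}$.

  For odd $t$, $A^t$ connects even vertices only to odd ones, so the block $B$ of $A^t$ with even
  rows and odd columns has as inverse the block of $A^{-t}$ with odd rows and even columns, and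
  $\det B = 1$ because $B$ is a product of unitriangular blocks of $A$. The theorem is Jacobi's
  complementary minor identity for $B$; the sign is that of the permutations moving the chosen rows
  and columns to the front, and the symmetry of $A^{-t}$ accounts for the transposition.\<close>

section \<open>Square matrices as functions\<close>

text \<open>A square matrix of size $D$ is represented by a function vanishing outside $\{0..<D\}^2$, so
  that polynomials in a matrix are pointwise sums.\<close>

type_synonym fmat = "nat \<Rightarrow> nat \<Rightarrow> real"

definition fmat_mult :: "nat \<Rightarrow> fmat \<Rightarrow> fmat \<Rightarrow> fmat" where
  "fmat_mult D X Y = (\<lambda>i j. if i < D \<and> j < D then (\<Sum>l<D. X i l * Y l j) else 0)"

definition fmat_one :: "nat \<Rightarrow> fmat" where
  "fmat_one D = (\<lambda>i j. if i = j \<and> i < D then 1 else 0)"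

definition fmat_supported :: "nat \<Rightarrow> fmat \<Rightarrow> bool" where
  "fmat_supported D X \<longleftrightarrow> (\<forall>i j. D \<le> i \<or> D \<le> j \<longrightarrow> X i j = 0)"

primrec fmat_pow :: "nat \<Rightarrow> fmat \<Rightarrow> nat \<Rightarrow> fmat" where
  "fmat_pow D X 0 = fmat_one D"
| "fmat_pow D X (Suc t) = fmat_mult D (fmat_pow D X t) X"

definition fmat_transpose :: "fmat \<Rightarrow> fmat" where
  "fmat_transpose X = (\<lambda>i j. X j i)"

lemma fmat_supported_mult [simp]: "fmat_supported D (fmat_mult D X Y)"
  by (auto simp: fmat_supported_def fmat_mult_def)

lemma fmat_supported_one [simp]: "fmat_supported D (fmat_one D)"
  by (auto simp: fmat_supported_def fmat_one_def)

lemma fmat_supported_pow [simp]: "fmat_supported D (fmat_pow D X t)"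
  by (cases t) auto

lemma fmat_supported_transpose [simp]:
  "fmat_supported D X \<Longrightarrow> fmat_supported D (fmat_transpose X)"
  by (auto simp: fmat_supported_def fmat_transpose_def)

lemma fmat_mult_assoc: "fmat_mult D (fmat_mult D X Y) Z = fmat_mult D X (fmat_mult D Y Z)"
proof (intro ext)
  fix i j
  have "(\<Sum>l<D. (\<Sum>l'<D. X i l' * Y l' l) * Z l j) = (\<Sum>l<D. \<Sum>l'<D. X i l' * Y l' l * Z l j)"
    by (simp add: sum_distrib_right)
  also have "\<dots> = (\<Sum>l'<D. \<Sum>l<D. X i l' * Y l' l * Z l j)"
    by (rule sum.swap)
  also have "\<dots> = (\<Sum>l'<D. X i l' * (\<Sum>l<D. Y l' l * Z l j))"
    by (simp add: sum_distrib_left mult.assoc)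
  finally show "fmat_mult D (fmat_mult D X Y) Z i j = fmat_mult D X (fmat_mult D Y Z) i j"
    by (auto simp: fmat_mult_def intro!: sum.cong)
qed

lemma fmat_mult_one_left: "fmat_supported D X \<Longrightarrow> fmat_mult D (fmat_one D) X = X"
  unfolding fmat_mult_def fmat_one_def fmat_supported_def
  by (intro ext) (auto simp: if_distrib[of "\<lambda>c. c * _"] if_distrib[of "\<lambda>c. _ * c"] cong: if_cong)

lemma fmat_mult_one_right: "fmat_supported D X \<Longrightarrow> fmat_mult D X (fmat_one D) = X"
  unfolding fmat_mult_def fmat_one_def fmat_supported_def
  by (intro ext) (auto simp: if_distrib[of "\<lambda>c. c * _"] if_distrib[of "\<lambda>c. _ * c"] cong: if_cong)

lemma fmat_mult_sum_right:
  "fmat_mult D X (\<lambda>a b. \<Sum>i\<in>S. c i * Y i a b) = (\<lambda>a b. \<Sum>i\<in>S. c i * fmat_mult D X (Y i) a b)"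
  unfolding fmat_mult_def
  by (intro ext)
    (auto simp: sum_distrib_left sum_distrib_right ac_simps intro: sum.swap[THEN trans] intro!: sum.cong)

lemma fmat_mult_sum_left:
  "fmat_mult D (\<lambda>a b. \<Sum>i\<in>S. c i * Y i a b) X = (\<lambda>a b. \<Sum>i\<in>S. c i * fmat_mult D (Y i) X a b)"
  unfolding fmat_mult_def
  by (intro ext)
    (auto simp: sum_distrib_left sum_distrib_right ac_simps intro: sum.swap[THEN trans] intro!: sum.cong)

lemma fmat_transpose_mult:
  "fmat_transpose (fmat_mult D X Y) = fmat_mult D (fmat_transpose Y) (fmat_transpose X)"
  by (intro ext) (auto simp: fmat_transpose_def fmat_mult_def mult.commute)

lemma fmat_transpose_one [simp]: "fmat_transpose (fmat_one D) = fmat_one D"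
  by (intro ext) (auto simp: fmat_transpose_def fmat_one_def)

lemma fmat_pow_add: "fmat_pow D X (a + b) = fmat_mult D (fmat_pow D X a) (fmat_pow D X b)"
  by (induction b) (simp_all add: fmat_mult_one_right fmat_mult_assoc)

lemma fmat_pow_Suc_left:
  "fmat_supported D X \<Longrightarrow> fmat_pow D X (Suc t) = fmat_mult D X (fmat_pow D X t)"
  using fmat_pow_add[of D X 1 t] by (simp add: fmat_mult_one_left)

lemma fmat_pow_mult_commute:
  "fmat_mult D (fmat_pow D X a) (fmat_pow D X b) = fmat_mult D (fmat_pow D X b) (fmat_pow D X a)"
  by (metis fmat_pow_add add.commute)

lemma fmat_pow_combination_commute:
  fixes D :: nat and X :: fmat
  defines "P \<equiv> \<lambda>I c a b. \<Sum>i\<in>I. c i * fmat_pow D X i a b"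
  shows "fmat_mult D (P S c) (P T d) = fmat_mult D (P T d) (P S c)"
proof -
  have "fmat_mult D (P S c) (P T d) =
      (\<lambda>a b. \<Sum>i\<in>S. \<Sum>j\<in>T. c i * d j * fmat_mult D (fmat_pow D X i) (fmat_pow D X j) a b)"
    by (simp add: P_def fmat_mult_sum_left fmat_mult_sum_right sum_distrib_left mult.assoc)
  also have "\<dots> = (\<lambda>a b. \<Sum>j\<in>T. \<Sum>i\<in>S. d j * c i * fmat_mult D (fmat_pow D X j) (fmat_pow D X i) a b)"
    by (subst sum.swap) (simp add: fmat_pow_mult_commute mult.commute)
  also have "\<dots> = fmat_mult D (P T d) (P S c)"
    by (simp add: P_def fmat_mult_sum_left fmat_mult_sum_right sum_distrib_left mult.assoc)
  finally show ?thesis .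
qed

lemma fmat_transpose_pow:
  "fmat_supported D X \<Longrightarrow> fmat_transpose (fmat_pow D X t) = fmat_pow D (fmat_transpose X) t"
  by (induction t) (simp_all add: fmat_transpose_mult fmat_pow_Suc_left[symmetric])

lemma fmat_pow_mult_pow_inverse:
  assumes "fmat_mult D X Y = fmat_one D" "fmat_supported D Y"
  shows "fmat_mult D (fmat_pow D X t) (fmat_pow D Y t) = fmat_one D"
proof (induction t)
  case (Suc t)
  have "fmat_mult D (fmat_pow D X (Suc t)) (fmat_pow D Y (Suc t))
      = fmat_mult D (fmat_pow D X t) (fmat_mult D (fmat_mult D X Y) (fmat_pow D Y t))"
    by (subst fmat_pow_Suc_left[OF assms(2)]) (simp only: fmat_pow.simps(2) fmat_mult_assoc)
  then show ?case by (simp add: assms(1) fmat_mult_one_left Suc.IH)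
qed (simp add: fmat_mult_one_left)

section \<open>Paths in a strip and powers of the path adjacency matrix\<close>

definition path_adj :: "nat \<Rightarrow> fmat" where
  "path_adj D = (\<lambda>i j. if i < D \<and> j < D \<and> (i = Suc j \<or> j = Suc i) then 1 else 0)"

lemma fmat_supported_path_adj [simp]: "fmat_supported D (path_adj D)"
  by (auto simp: fmat_supported_def path_adj_def)

lemma fmat_transpose_path_adj [simp]: "fmat_transpose (path_adj D) = path_adj D"
  by (intro ext) (auto simp: fmat_transpose_def path_adj_def)

lemma fmat_mult_path_adj_left:
  assumes "i < D" "j < D"
  shows "fmat_mult D (path_adj D) X i j =
    (if 0 < i then X (i - 1) j else 0) + (if Suc i < D then X (Suc i) j else 0)"
proof -
  have "fmat_mult D (path_adj D) X i j =
      (\<Sum>l<D. (if l = i - 1 \<and> 0 < i then X l j else 0) + (if l = Suc i then X l j else 0))"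
    using assms unfolding fmat_mult_def path_adj_def by (auto intro!: sum.cong)
  then show ?thesis
    using assms by (simp add: sum.distrib sum.delta' cong: if_cong)
qed

lemma fmat_mult_path_adj_right:
  assumes "i < D" "j < D"
  shows "fmat_mult D X (path_adj D) i j =
    (if 0 < j then X i (j - 1) else 0) + (if Suc j < D then X i (Suc j) else 0)"
proof -
  have "fmat_mult D X (path_adj D) i j =
      (\<Sum>l<D. (if l = j - 1 \<and> 0 < j then X i l else 0) + (if l = Suc j then X i l else 0))"
    using assms unfolding fmat_mult_def path_adj_def by (auto intro!: sum.cong)
  then show ?thesis
    using assms by (simp add: sum.distrib sum.delta' cong: if_cong)
qed

definition strip_paths :: "nat \<Rightarrow> nat \<Rightarrow> nat \<Rightarrow> nat \<Rightarrow> nat list set" where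
  "strip_paths K N r s = {ys :: nat list. length ys = Suc N \<and> ys ! 0 = r \<and> ys ! N = s \<and>
      (\<forall>y\<in>set ys. y \<le> K) \<and>
      (\<forall>i<N. ys ! (Suc i) = ys ! i + 1 \<or> ys ! i = ys ! (Suc i) + 1)}"

lemma paths_count_eq_card: "paths_count K N r s = card (strip_paths K N r s)"
  unfolding paths_count_def strip_paths_def ..

lemma finite_strip_paths: "finite (strip_paths K N r s)"
proof (rule finite_subset)
  show "strip_paths K N r s \<subseteq> {ys. set ys \<subseteq> {..K} \<and> length ys = Suc N}"
    unfolding strip_paths_def by auto
qed (simp add: finite_lists_length_eq)

lemma strip_paths_0: "strip_paths K 0 r s = (if r = s \<and> r \<le> K then {[r]} else {})"
  by (auto simp: strip_paths_def length_Suc_conv)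

lemma snoc_mem_strip_paths_iff:
  assumes "length zs = Suc N"
  shows "zs @ [s] \<in> strip_paths K (Suc N) r s \<longleftrightarrow>
    zs \<in> strip_paths K N r (zs ! N) \<and> s \<le> K \<and> (s = Suc (zs ! N) \<or> zs ! N = Suc s)"
proof -
  have "(zs @ [s]) ! i = zs ! i" if "i \<le> N" for i
    using assms that by (simp add: nth_append)
  then show ?thesis
    using assms by (auto simp: strip_paths_def All_less_Suc nth_append)
qed

lemma strip_paths_Suc:
  assumes "s \<le> K"
  shows "strip_paths K (Suc N) r s =
    (\<Union>t\<in>{t. t \<le> K \<and> (s = Suc t \<or> t = Suc s)}. (\<lambda>zs. zs @ [s]) ` strip_paths K N r t)"
    (is "_ = ?U")
proof (intro equalityI subsetI)
  fix ys assume ys: "ys \<in> strip_paths K (Suc N) r s"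
  then have "length ys = Suc (Suc N)" "ys ! Suc N = s"
    by (auto simp: strip_paths_def)
  then obtain zs where zs: "ys = zs @ [s]" "length zs = Suc N"
    by (metis append_butlast_last_id diff_Suc_1 last_conv_nth length_butlast list.size(3) nat.distinct(1))
  with ys have "zs \<in> strip_paths K N r (zs ! N)" "s = Suc (zs ! N) \<or> zs ! N = Suc s"
    using snoc_mem_strip_paths_iff by blast+
  moreover from this have "zs ! N \<le> K"
    by (auto simp: strip_paths_def)
  ultimately show "ys \<in> ?U"
    using zs(1) by blast
next
  fix ys assume "ys \<in> ?U"
  then obtain t zs where "s = Suc t \<or> t = Suc s" "zs \<in> strip_paths K N r t" "ys = zs @ [s]"
    by blast
  moreover from this have "length zs = Suc N" "zs ! N = t"
    by (auto simp: strip_paths_def)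
  ultimately show "ys \<in> strip_paths K (Suc N) r s"
    using snoc_mem_strip_paths_iff[of zs N s K r] assms by auto
qed

lemma card_strip_paths_Suc:
  assumes "s \<le> K"
  shows "card (strip_paths K (Suc N) r s) =
    (\<Sum>t | t \<le> K \<and> (s = Suc t \<or> t = Suc s). card (strip_paths K N r t))"
proof -
  have fin: "finite {t. t \<le> K \<and> (s = Suc t \<or> t = Suc s)}"
    by (rule finite_subset[of _ "{..K}"]) auto
  have "card (strip_paths K (Suc N) r s) =
      (\<Sum>t | t \<le> K \<and> (s = Suc t \<or> t = Suc s). card ((\<lambda>zs. zs @ [s]) ` strip_paths K N r t))"
    unfolding strip_paths_Suc[OF assms]
    by (rule card_UN_disjoint[OF fin]) (simp add: finite_strip_paths, auto simp: strip_paths_def)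
  also have "\<dots> = (\<Sum>t | t \<le> K \<and> (s = Suc t \<or> t = Suc s). card (strip_paths K N r t))"
    by (intro sum.cong refl card_image) (auto simp: inj_on_def)
  finally show ?thesis .
qed

lemma paths_count_eq_path_adj_pow:
  assumes "r \<le> K" "s \<le> K"
  shows "real (paths_count K N r s) = fmat_pow (Suc K) (path_adj (Suc K)) N r s"
  using assms(2)
proof (induction N arbitrary: s)
  case 0
  then show ?case
    using assms(1) by (simp add: paths_count_eq_card strip_paths_0 fmat_one_def)
next
  case (Suc N)
  let ?A = "path_adj (Suc K)"
  have "real (paths_count K (Suc N) r s) =
      (\<Sum>t | t \<le> K \<and> (s = Suc t \<or> t = Suc s). real (paths_count K N r t))"
    using Suc.prems by (simp add: paths_count_eq_card card_strip_paths_Suc)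
  also have "\<dots> = (\<Sum>t | t \<le> K \<and> (s = Suc t \<or> t = Suc s). fmat_pow (Suc K) ?A N r t)"
    using Suc.IH by (intro sum.cong refl) auto
  also have "\<dots> = (\<Sum>t<Suc K. fmat_pow (Suc K) ?A N r t * ?A t s)"
    using Suc.prems by (intro sum.mono_neutral_cong_left) (auto simp: path_adj_def)
  also have "\<dots> = fmat_pow (Suc K) ?A (Suc N) r s"
    using assms(1) Suc.prems by (simp add: fmat_mult_def)
  finally show ?case .
qed

definition path_adj_inv :: "nat \<Rightarrow> fmat" where
  "path_adj_inv D = (\<lambda>i j. if i < D \<and> j < D \<and> odd (i + j) \<and> (odd i \<longleftrightarrow> j < i)
     then (-1) ^ ((i + j - 1) div 2) else 0)"

lemma fmat_supported_path_adj_inv [simp]: "fmat_supported D (path_adj_inv D)"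
  by (auto simp: fmat_supported_def path_adj_inv_def)

lemma fmat_transpose_path_adj_inv [simp]: "fmat_transpose (path_adj_inv D) = path_adj_inv D"
  by (intro ext) (auto simp: fmat_transpose_def path_adj_inv_def add.commute)

lemma path_adj_mult_inv:
  assumes "even D"
  shows "fmat_mult D (path_adj D) (path_adj_inv D) = fmat_one D"
proof (intro ext)
  fix i j
  let ?W = "path_adj_inv D"
  show "fmat_mult D (path_adj D) ?W i j = fmat_one D i j"
  proof (cases "i < D \<and> j < D")
    case False
    then show ?thesis by (auto simp: fmat_mult_def fmat_one_def)
  next
    case True
    have "(if 0 < i then ?W (i - 1) j else 0) + (if Suc i < D then ?W (Suc i) j else 0) = fmat_one D i j"
    proof (cases "even i")
      case True
      then obtain a where a: "i = 2 * a" by (auto elim: evenE)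
      with \<open>i < D \<and> j < D\<close> assms have "Suc i < D" "j < D" by (auto elim!: evenE)
      show ?thesis
      proof (cases "even j")
        case True
        then obtain b where b: "j = 2 * b" by (auto elim: evenE)
        show ?thesis
        proof (cases "b < a")
          case True
          then obtain c where "a = Suc (b + c)" using less_imp_Suc_add by blast
          then show ?thesis using \<open>Suc i < D\<close> \<open>j < D\<close> a b by (simp add: path_adj_inv_def fmat_one_def)
        qed (use \<open>Suc i < D\<close> \<open>j < D\<close> a b in \<open>auto simp: path_adj_inv_def fmat_one_def\<close>)
      qed (use \<open>Suc i < D\<close> \<open>j < D\<close> a in \<open>auto simp: path_adj_inv_def fmat_one_def odd_pos\<close>)
    next
      case False
      then obtain a where a: "i = 2 * a + 1" by (auto elim: oddE)
      show ?thesis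
      proof (cases "odd j")
        case True
        then obtain b where b: "j = 2 * b + 1" by (auto elim: oddE)
        show ?thesis
        proof (cases "a < b")
          case True
          then obtain c where "b = Suc (a + c)" using less_imp_Suc_add by blast
          then show ?thesis using \<open>i < D \<and> j < D\<close> a b by (auto simp: path_adj_inv_def fmat_one_def)
        qed (use \<open>i < D \<and> j < D\<close> a b in \<open>auto simp: path_adj_inv_def fmat_one_def\<close>)
      qed (use \<open>i < D \<and> j < D\<close> a in \<open>auto simp: path_adj_inv_def fmat_one_def\<close>)
    qed
    with True show ?thesis by (simp add: fmat_mult_path_adj_left)
  qed
qed

lemma path_adj_inv_mult:
  assumes "even D"
  shows "fmat_mult D (path_adj_inv D) (path_adj D) = fmat_one D"
  using arg_cong[OF path_adj_mult_inv[OF assms], of fmat_transpose]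
  by (simp add: fmat_transpose_mult)

lemma fmat_pow_path_adj_inv_symmetric:
  "fmat_pow D (path_adj_inv D) t i j = fmat_pow D (path_adj_inv D) t j i"
proof -
  have "fmat_transpose (fmat_pow D (path_adj_inv D) t) = fmat_pow D (path_adj_inv D) t"
    by (simp add: fmat_transpose_pow)
  then show ?thesis
    by (metis fmat_transpose_def)
qed

section \<open>Chebyshev polynomials of the path adjacency matrix\<close>

text \<open>\<open>cheb_coeff j i\<close> is the coefficient of $x^i$ in the Chebyshev polynomial $U_j(x/2)$.\<close>
fun cheb_coeff :: "nat \<Rightarrow> nat \<Rightarrow> real" where
  "cheb_coeff 0 i = (if i = 0 then 1 else 0)"
| "cheb_coeff (Suc 0) i = (if i = 1 then 1 else 0)"
| "cheb_coeff (Suc (Suc j)) i = (if i = 0 then 0 else cheb_coeff (Suc j) (i - 1)) - cheb_coeff j i"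

lemma cheb_coeff_eq_0: "j < i \<Longrightarrow> cheb_coeff j i = 0"
  by (induction j i rule: cheb_coeff.induct) auto

lemma cheb_coeff_self: "cheb_coeff j j = 1"
  by (induction j rule: induct_nat_012) (auto simp: cheb_coeff_eq_0)

lemma cheb_coeff_even_0: "cheb_coeff (2 * L) 0 = (-1) ^ L"
  by (induction L) (auto simp: numeral_2_eq_2)

definition cheb_adj :: "nat \<Rightarrow> nat \<Rightarrow> fmat" where
  "cheb_adj D j = (\<lambda>a b. \<Sum>i\<le>j. cheb_coeff j i * fmat_pow D (path_adj D) i a b)"

lemma fmat_supported_cheb_adj [simp]: "fmat_supported D (cheb_adj D j)"
  using fmat_supported_pow[of D "path_adj D"] unfolding fmat_supported_def cheb_adj_def by simp

lemma cheb_adj_Suc_Suc: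
  "cheb_adj D (Suc (Suc j)) = (\<lambda>a b. fmat_mult D (path_adj D) (cheb_adj D (Suc j)) a b - cheb_adj D j a b)"
proof (intro ext)
  fix a b
  let ?P = "\<lambda>i. fmat_pow D (path_adj D) i a b"
  have "fmat_mult D (path_adj D) (cheb_adj D (Suc j)) a b = (\<Sum>i\<le>Suc j. cheb_coeff (Suc j) i * ?P (Suc i))"
    unfolding cheb_adj_def fmat_mult_sum_right fmat_pow_Suc_left[OF fmat_supported_path_adj, symmetric] ..
  also have "\<dots> = (\<Sum>i\<le>Suc (Suc j). (if i = 0 then 0 else cheb_coeff (Suc j) (i - 1)) * ?P i)"
    by (simp add: sum.atMost_Suc_shift del: sum.atMost_Suc)
  moreover have "cheb_adj D j a b = (\<Sum>i\<le>Suc (Suc j). cheb_coeff j i * ?P i)"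
    by (simp add: cheb_adj_def cheb_coeff_eq_0)
  ultimately show
    "cheb_adj D (Suc (Suc j)) a b = fmat_mult D (path_adj D) (cheb_adj D (Suc j)) a b - cheb_adj D j a b"
    by (simp add: cheb_adj_def left_diff_distrib sum_subtractf del: sum.atMost_Suc)
qed

lemma cheb_adj_first_col:
  assumes "j \<le> D" "a < D"
  shows "cheb_adj D j a 0 = (if a = j then 1 else 0)"
  using assms
proof (induction j arbitrary: a rule: induct_nat_012)
  case 0
  then show ?case by (simp add: cheb_adj_def fmat_one_def)
next
  case 1
  then show ?case by (simp add: cheb_adj_def fmat_mult_one_left, auto simp: path_adj_def)
next
  case (ge2 j)
  have "cheb_adj D (Suc (Suc j)) a 0 =
      (if 0 < a then cheb_adj D (Suc j) (a - 1) 0 else 0) + (if Suc a < D then cheb_adj D (Suc j) (Suc a) 0 else 0)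
      - cheb_adj D j a 0"
    using ge2.prems by (simp add: cheb_adj_Suc_Suc fmat_mult_path_adj_left)
  then show ?case
    using ge2 by auto
qed

text \<open>The first column of $U_D(A/2)$ vanishes, and $U_D(A/2)$ commutes with $U_b(A/2)$, which maps
  the first unit vector to the $b$-th one.\<close>
lemma cheb_adj_self_eq_0:
  assumes "2 \<le> D"
  shows "cheb_adj D D a b = 0"
proof (cases "a < D \<and> b < D")
  case True
  have "cheb_adj D D a b = (\<Sum>l<D. cheb_adj D D a l * cheb_adj D b l 0)"
    using True cheb_adj_first_col[of b D] by (simp add: if_distrib[of "\<lambda>c. _ * c"] sum.delta' cong: if_cong)
  also have "\<dots> = fmat_mult D (cheb_adj D D) (cheb_adj D b) a 0"
    using True by (simp add: fmat_mult_def)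
  also have "\<dots> = fmat_mult D (cheb_adj D b) (cheb_adj D D) a 0"
    unfolding cheb_adj_def by (simp only: fmat_pow_combination_commute)
  also have "\<dots> = 0"
    using True assms cheb_adj_first_col[of D D] by (simp add: fmat_mult_def)
  finally show ?thesis .
next
  case False
  then show ?thesis
    using fmat_supported_cheb_adj[of D D] unfolding fmat_supported_def by auto
qed

definition path_adj_zpow :: "nat \<Rightarrow> int \<Rightarrow> fmat" where
  "path_adj_zpow D N =
    (if 0 \<le> N then fmat_pow D (path_adj D) (nat N) else fmat_pow D (path_adj_inv D) (nat (- N)))"

lemma path_adj_zpow_mult_adj:
  assumes "even D"
  shows "fmat_mult D (path_adj_zpow D N) (path_adj D) = path_adj_zpow D (N + 1)"
proof (cases "0 \<le> N")
  case True
  then show ?thesis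
    by (simp add: path_adj_zpow_def nat_add_distrib)
next
  case False
  then obtain t where t: "nat (- N) = Suc t"
    using gr0_implies_Suc by fastforce
  have "fmat_mult D (fmat_pow D (path_adj_inv D) (Suc t)) (path_adj D) = fmat_pow D (path_adj_inv D) t"
    by (simp add: fmat_mult_assoc path_adj_inv_mult[OF assms] fmat_mult_one_right)
  moreover have "path_adj_zpow D (N + 1) = fmat_pow D (path_adj_inv D) t"
  proof (cases "N + 1 = 0")
    case False
    with t have "\<not> 0 \<le> N + 1" "nat (- (N + 1)) = t" by auto
    then show ?thesis unfolding path_adj_zpow_def by simp
  next
    case True
    with t have "t = 0" by simp
    with True show ?thesis by (simp add: path_adj_zpow_def)
  qed
  ultimately show ?thesis
    using False t by (simp add: path_adj_zpow_def)
qed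

lemma path_adj_zpow_mult_pow:
  assumes "even D"
  shows "fmat_mult D (path_adj_zpow D N) (fmat_pow D (path_adj D) i) = path_adj_zpow D (N + int i)"
proof (induction i)
  case 0
  have "fmat_supported D (path_adj_zpow D N)"
    by (simp add: path_adj_zpow_def)
  then show ?case
    by (simp add: fmat_mult_one_right)
next
  case (Suc i)
  then show ?case
    by (simp flip: fmat_mult_assoc add: path_adj_zpow_mult_adj[OF assms] ac_simps)
qed

text \<open>$U_D(x/2)$ is the characteristic polynomial of $A$.\<close>
lemma path_adj_zpow_recurrence:
  assumes "even D" "2 \<le> D"
  shows "(\<Sum>i\<le>D. cheb_coeff D i * path_adj_zpow D (N + int i) a b) = 0"
proof -
  have "(\<Sum>i\<le>D. cheb_coeff D i * path_adj_zpow D (N + int i) a b) =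
      fmat_mult D (path_adj_zpow D N) (cheb_adj D D) a b"
    unfolding cheb_adj_def fmat_mult_sum_right by (simp add: path_adj_zpow_mult_pow[OF assms(1)])
  also have "\<dots> = 0"
    by (simp add: fmat_mult_def cheb_adj_self_eq_0[OF assms(2)])
  finally show ?thesis .
qed

section \<open>Generating functions and negative lengths\<close>

lemma recurrence_eventually_zero_imp_zero:
  fixes g :: "int \<Rightarrow> 'a :: idom"
  assumes rec: "\<And>N. (\<Sum>i\<le>d. c i * g (N + int i)) = 0" and "c 0 \<noteq> 0"
    and zero: "\<And>N. M \<le> N \<Longrightarrow> g N = 0"
  shows "g N = 0"
proof -
  have "\<forall>N. M - int t \<le> N \<longrightarrow> g N = 0" for t
  proof (induction t)
    case (Suc t)
    show ?case
    proof (intro allI impI)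
      fix N assume N: "M - int (Suc t) \<le> N"
      have "(\<Sum>i<d. c (Suc i) * g (N + int (Suc i))) = 0"
        using Suc.IH N by (intro sum.neutral) auto
      then have "c 0 * g N = 0"
        using rec[of N] by (simp add: sum.atMost_shift del: of_nat_Suc)
      then show "g N = 0"
        using \<open>c 0 \<noteq> 0\<close> by simp
    qed
  qed (use zero in auto)
  from this[of "nat (M - N)"] show ?thesis by simp
qed

lemma fps_nth_poly_mult_Abs_fps:
  "fps_nth (fps_of_poly q * Abs_fps (\<lambda>n. f (int n))) n =
    (\<Sum>i\<le>n. coeff q i * (f (int n - int i) :: 'a :: comm_ring_1))"
  unfolding fps_mult_nth atLeast0AtMost by (intro sum.cong refl) (simp add: of_nat_diff)

lemma coeff_sum_monom: "coeff (\<Sum>i\<le>d. monom (h i) i) n = (if n \<le> d then h n else 0)"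
  by (simp add: coeff_sum coeff_monom sum.delta' cong: if_cong)

text \<open>The denominator is the reversed characteristic polynomial of the recurrence.\<close>
lemma rational_fps_of_recurrence:
  fixes f :: "int \<Rightarrow> 'a :: field"
  assumes rec: "\<And>N. (\<Sum>i\<le>d. c i * f (N + int i)) = 0" and "0 < d" "c 0 \<noteq> 0" "c d \<noteq> 0"
  shows "\<exists>p q. poly q 0 \<noteq> 0 \<and> degree p < degree q \<and>
    fps_of_poly q * Abs_fps (\<lambda>n. f (int n)) = fps_of_poly p"
proof -
  define q where "q = (\<Sum>i\<le>d. monom (c (d - i)) i)"
  define F where "F = fps_of_poly q * Abs_fps (\<lambda>n. f (int n))"
  define p where "p = (\<Sum>i\<le>d - 1. monom (fps_nth F i) i)"
  have coeff_q: "coeff q i = (if i \<le> d then c (d - i) else 0)" for i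
    unfolding q_def coeff_sum_monom ..
  have "degree q = d"
    by (rule antisym, rule degree_le) (auto simp: coeff_q intro: le_degree simp: \<open>c 0 \<noteq> 0\<close>)
  have F_high: "fps_nth F n = 0" if "d \<le> n" for n
  proof -
    have "fps_nth F n = (\<Sum>i\<le>d. c (d - i) * f (int n - int i))"
      unfolding F_def fps_nth_poly_mult_Abs_fps using that
      by (intro sum.mono_neutral_cong_right) (auto simp: coeff_q)
    also have "\<dots> = (\<Sum>j\<le>d. c j * f (int (n - d) + int j))"
      using that by (intro sum.reindex_bij_witness[of _ "\<lambda>j. d - j" "\<lambda>i. d - i"]) (auto simp: of_nat_diff)
    also have "\<dots> = 0" by (rule rec)
    finally show ?thesis .
  qed
  have "fps_of_poly p = F"
    using F_high \<open>0 < d\<close> by (intro fps_ext) (auto simp: p_def coeff_sum_monom)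
  moreover have "degree p < degree q"
    using \<open>degree q = d\<close> \<open>0 < d\<close> degree_le[of "d - 1" p] by (fastforce simp: p_def coeff_sum_monom)
  moreover have "poly q 0 \<noteq> 0"
    using \<open>c d \<noteq> 0\<close> by (simp add: poly_0_coeff_0 coeff_q)
  ultimately show ?thesis
    unfolding F_def by metis
qed

lemma denominator_convolution_eq_0:
  fixes f :: "int \<Rightarrow> 'a :: idom" and p q :: "'a poly"
  assumes rec: "\<And>N. (\<Sum>i\<le>d. c i * f (N + int i)) = 0" and "c 0 \<noteq> 0" and "degree p < degree q"
    and pq: "fps_of_poly q * Abs_fps (\<lambda>n. f (int n)) = fps_of_poly p"
  shows "(\<Sum>i\<le>degree q. coeff q i * f (N - int i)) = 0"
proof -
  define g where "g N = (\<Sum>i\<le>degree q. coeff q i * f (N - int i))" for N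
  show ?thesis
    unfolding g_def[symmetric]
  proof (rule recurrence_eventually_zero_imp_zero[where c = c and d = d and g = g and M = "int (degree q)"])
    show "(\<Sum>i\<le>d. c i * g (N + int i)) = 0" for N
    proof -
      have "(\<Sum>i\<le>d. c i * g (N + int i)) =
          (\<Sum>j\<le>degree q. coeff q j * (\<Sum>i\<le>d. c i * f (N - int j + int i)))"
        unfolding g_def sum_distrib_left by (subst sum.swap) (simp add: algebra_simps)
      then show ?thesis
        by (simp add: rec)
    qed
    show "g N = 0" if le: "int (degree q) \<le> N" for N
    proof -
      obtain n where n: "N = int n" "degree q \<le> n"
        using le by (cases N) auto
      have "g N = (\<Sum>i\<le>n. coeff q i * f (int n - int i))"
        unfolding g_def n(1) using n(2) by (intro sum.mono_neutral_left) (auto simp: coeff_eq_0)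
      also have "\<dots> = coeff p n"
        using fps_nth_poly_mult_Abs_fps[of q f n] pq by simp
      also have "\<dots> = 0"
        using n assms(3) by (simp add: coeff_eq_0)
      finally show ?thesis .
    qed
  qed fact
qed

lemma fps_nth_reflect_poly_mult_backward:
  "fps_nth (fps_of_poly (reflect_poly q) * Abs_fps (\<lambda>n. if n = 0 then 0 else f (- int n))) M =
    (\<Sum>i | i \<le> degree q \<and> degree q < M + i. coeff q i * (f (int (degree q) - int M - int i) :: 'a :: comm_ring_1))"
proof -
  define d where "d = degree q"
  have "fps_nth (fps_of_poly (reflect_poly q) * Abs_fps (\<lambda>n. if n = 0 then 0 else f (- int n))) M =
      (\<Sum>j | j < M \<and> j \<le> d. coeff q (d - j) * f (int j - int M))"
    unfolding fps_mult_nth d_def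
    by (intro sum.mono_neutral_cong_right) (auto simp: coeff_reflect_poly of_nat_diff)
  also have "\<dots> = (\<Sum>i | i \<le> d \<and> d < M + i. coeff q i * f (int d - int M - int i))"
    by (rule sum.reindex_bij_witness[of _ "\<lambda>i. d - i" "\<lambda>j. d - j"]) (auto simp: of_nat_diff)
  finally show ?thesis
    unfolding d_def .
qed

text \<open>The convolution of the sequence with $q$ vanishes on all of $\mathbb{Z}$; at negative indices
  this is the coefficient identity behind the quotient.\<close>
lemma neg_reflected_fps_eq_backward:
  fixes f :: "int \<Rightarrow> 'a :: field" and p q :: "'a poly"
  assumes rec: "\<And>N. (\<Sum>i\<le>d. c i * f (N + int i)) = 0" and "c 0 \<noteq> 0"
    and "poly q 0 \<noteq> 0" "degree p < degree q"
    and pq: "fps_of_poly q * Abs_fps (\<lambda>n. f (int n)) = fps_of_poly p"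
  shows "- fps_of_poly (monom 1 (degree q - degree p) * reflect_poly p) / fps_of_poly (reflect_poly q)
       = Abs_fps (\<lambda>n. if n = 0 then 0 else f (- int n))"
proof -
  define dq where "dq = degree q"
  define g where "g N = (\<Sum>i\<le>dq. coeff q i * f (N - int i))" for N
  define G where "G = Abs_fps (\<lambda>n. if n = 0 then 0 else f (- int n))"
  define X where "X = fps_of_poly (monom 1 (dq - degree p) * reflect_poly p)"
  define Y where "Y = fps_of_poly (reflect_poly q)"
  have coeff_p: "coeff p n = (\<Sum>i\<le>n. coeff q i * f (int n - int i))" for n
    using fps_nth_poly_mult_Abs_fps[of q f n] pq by simp
  have g_zero: "g N = 0" for N
    unfolding g_def dq_def using assms(1,2,4,5) by (rule denominator_convolution_eq_0)
  have "fps_nth (Y * G) M = fps_nth (- X) M" for M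
  proof -
    define S where "S = {i. i \<le> dq \<and> dq < M + i}"
    define T where "T = {i. i \<le> dq \<and> M + i \<le> dq}"
    have "fps_nth (Y * G) M = (\<Sum>i\<in>S. coeff q i * f (int dq - int M - int i))"
      unfolding Y_def G_def S_def dq_def by (rule fps_nth_reflect_poly_mult_backward)
    also have "\<dots> = g (int dq - int M) - (\<Sum>i\<in>T. coeff q i * f (int dq - int M - int i))"
    proof -
      have "{..dq} = S \<union> T" "S \<inter> T = {}"
        by (auto simp: S_def T_def)
      then show ?thesis
        unfolding g_def by (simp add: sum.union_disjoint S_def T_def)
    qed
    also have "\<dots> = - (if M \<le> dq then coeff p (dq - M) else 0)"
    proof (cases "M \<le> dq")
      case True
      then have "T = {..dq - M}"
        by (auto simp: T_def)
      with True show ?thesis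
        by (simp add: g_zero coeff_p of_nat_diff)
    qed (simp add: g_zero T_def)
    also have "\<dots> = fps_nth (- X) M"
    proof (cases "dq - degree p \<le> M")
      case True
      have "degree p < dq"
        using assms(4) by (simp add: dq_def)
      with True show ?thesis
        by (simp add: X_def coeff_monom_mult coeff_reflect_poly) arith
    next
      case False
      then show ?thesis
        by (simp add: X_def coeff_monom_mult coeff_eq_0)
    qed
    finally show ?thesis .
  qed
  then have "Y * G = - X"
    by (rule fps_ext)
  moreover have "Y \<noteq> 0"
    using \<open>poly q 0 \<noteq> 0\<close> by (auto simp: Y_def)
  ultimately have "- X / Y = G"
    by (metis fps_divide_times_eq mult.commute)
  then show ?thesis
    unfolding X_def Y_def G_def dq_def .
qed

lemma path_gf_eq_zpow:
  assumes "u \<le> K" "v \<le> K"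
  shows "path_gf K u v = Abs_fps (\<lambda>n. path_adj_zpow (Suc K) (int n) u v)"
  using assms by (simp add: path_gf_def path_adj_zpow_def paths_count_eq_path_adj_pow)

lemma path_adj_zpow_recurrence_odd:
  assumes "odd K"
  shows "(\<Sum>i\<le>Suc K. cheb_coeff (Suc K) i * path_adj_zpow (Suc K) (N + int i) u v) = 0"
    and "cheb_coeff (Suc K) 0 \<noteq> 0"
proof -
  obtain L where "Suc K = 2 * L"
    using assms by (metis evenE even_Suc)
  then show "cheb_coeff (Suc K) 0 \<noteq> 0"
    by (simp add: cheb_coeff_even_0)
  show "(\<Sum>i\<le>Suc K. cheb_coeff (Suc K) i * path_adj_zpow (Suc K) (N + int i) u v) = 0"
    using assms by (intro path_adj_zpow_recurrence) (auto simp: odd_pos Suc_le_eq)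
qed

lemma rat_rep_path_gf:
  assumes "odd K" "u \<le> K" "v \<le> K"
  shows "case rat_rep K u v of (p, q) \<Rightarrow>
    poly q 0 \<noteq> 0 \<and> degree p < degree q \<and> fps_of_poly q * path_gf K u v = fps_of_poly p"
proof -
  have "\<exists>p q. poly q 0 \<noteq> 0 \<and> degree p < degree q \<and>
      fps_of_poly q * Abs_fps (\<lambda>n. path_adj_zpow (Suc K) (int n) u v) = fps_of_poly p"
    by (rule rational_fps_of_recurrence[where c = "cheb_coeff (Suc K)" and d = "Suc K"])
      (simp_all add: path_adj_zpow_recurrence_odd[OF assms(1)] cheb_coeff_self del: sum.atMost_Suc)
  then show ?thesis
    unfolding rat_rep_def path_gf_eq_zpow[OF assms(2,3)] by (intro someI_ex[where P = "\<lambda>(p, q). _ p q"]) auto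
qed

lemma C_eq_path_adj_zpow:
  assumes "odd K" "u \<le> K" "v \<le> K"
  shows "C K N u v = path_adj_zpow (Suc K) N u v"
proof (cases "0 \<le> N")
  case True
  then show ?thesis
    using assms by (simp add: C_def path_adj_zpow_def paths_count_eq_path_adj_pow)
next
  case False
  obtain p q where pq: "rat_rep K u v = (p, q)"
    by fastforce
  then have rep: "poly q 0 \<noteq> 0" "degree p < degree q"
    "fps_of_poly q * Abs_fps (\<lambda>n. path_adj_zpow (Suc K) (int n) u v) = fps_of_poly p"
    using rat_rep_path_gf[OF assms] by (auto simp: path_gf_eq_zpow[OF assms(2,3)])
  have "neg_gf K u v = Abs_fps (\<lambda>n. if n = 0 then 0 else path_adj_zpow (Suc K) (- int n) u v)"
    unfolding neg_gf_def pq prod.case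
    by (rule neg_reflected_fps_eq_backward[where c = "cheb_coeff (Suc K)" and d = "Suc K"])
      (simp_all add: path_adj_zpow_recurrence_odd[OF assms(1)] rep del: sum.atMost_Suc)
  with False show ?thesis
    by (simp add: C_def)
qed

section \<open>Even and odd blocks\<close>

lemma fmat_pow_path_adj_parity: "odd (t + a + b) \<Longrightarrow> fmat_pow D (path_adj D) t a b = 0"
proof (induction t arbitrary: b)
  case 0
  then show ?case by (auto simp: fmat_one_def)
next
  case (Suc t)
  show ?case
  proof (cases "a < D \<and> b < D")
    case True
    then have "fmat_pow D (path_adj D) (Suc t) a b =
        (if 0 < b then fmat_pow D (path_adj D) t a (b - 1) else 0) +
        (if Suc b < D then fmat_pow D (path_adj D) t a (Suc b) else 0)"
      by (simp add: fmat_mult_path_adj_right)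
    also have "\<dots> = 0"
      using Suc by (cases b) auto
    finally show ?thesis .
  qed (auto simp: fmat_mult_def)
qed

lemma sum_lessThan_double:
  "(\<Sum>l<2 * (L::nat). h l) = (\<Sum>j<L. h (2 * j)) + (\<Sum>j<L. h (2 * j + 1) :: 'a :: comm_monoid_add)"
  by (induction L) (auto simp: numeral_2_eq_2 ac_simps)

definition parity_block :: "nat \<Rightarrow> fmat \<Rightarrow> nat \<Rightarrow> nat \<Rightarrow> real mat" where
  "parity_block L X p q = mat L L (\<lambda>(i, j). X (2 * i + p) (2 * j + q))"

lemma parity_block_carrier [simp]: "parity_block L X p q \<in> carrier_mat L L"
  by (simp add: parity_block_def)

lemma parity_block_one: "p \<le> 1 \<Longrightarrow> parity_block L (fmat_one (2 * L)) p p = 1\<^sub>m L"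
  by (rule eq_matI) (auto simp: parity_block_def fmat_one_def)

lemma parity_block_mult:
  assumes "p \<le> 1" "q \<le> 1" "r \<le> 1"
    and parity: "\<And>i l. i < L \<Longrightarrow> l < 2 * L \<Longrightarrow> odd (l + q) \<Longrightarrow> X (2 * i + p) l = 0"
  shows "parity_block L (fmat_mult (2 * L) X Y) p r = parity_block L X p q * parity_block L Y q r"
proof (rule eq_matI)
  fix i j assume "i < dim_row (parity_block L X p q * parity_block L Y q r)"
    "j < dim_col (parity_block L X p q * parity_block L Y q r)"
  then have ij: "i < L" "j < L" by (auto simp: parity_block_def)
  let ?h = "\<lambda>l. X (2 * i + p) l * Y l (2 * j + r)"
  have "parity_block L (fmat_mult (2 * L) X Y) p r $$ (i, j) = (\<Sum>l<2 * L. ?h l)"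
    using ij assms(1,3) by (simp add: parity_block_def fmat_mult_def)
  also have "\<dots> = (\<Sum>l<L. ?h (2 * l)) + (\<Sum>l<L. ?h (2 * l + 1))"
    by (rule sum_lessThan_double)
  also have "\<dots> = (\<Sum>l<L. ?h (2 * l + q))"
  proof (cases "q = 0")
    case True
    then have "(\<Sum>l<L. ?h (2 * l + 1)) = 0"
      using parity ij by (intro sum.neutral) auto
    with True show ?thesis by simp
  next
    case False
    with assms(2) have "q = 1" by simp
    then have "(\<Sum>l<L. ?h (2 * l)) = 0"
      using parity ij by (intro sum.neutral) auto
    with \<open>q = 1\<close> show ?thesis by simp
  qed
  also have "\<dots> = (parity_block L X p q * parity_block L Y q r) $$ (i, j)"
    using ij by (simp add: parity_block_def scalar_prod_def atLeast0LessThan)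
  finally show "parity_block L (fmat_mult (2 * L) X Y) p r $$ (i, j) =
      (parity_block L X p q * parity_block L Y q r) $$ (i, j)" .
qed (auto simp: parity_block_def)

lemma det_parity_block_path_adj:
  assumes "p \<le> 1"
  shows "det (parity_block L (path_adj (2 * L)) p (1 - p)) = 1"
proof -
  let ?M = "parity_block L (path_adj (2 * L)) p (1 - p)"
  have "det ?M = prod_list (diag_mat ?M)"
  proof (cases "p = 0")
    case True
    then show ?thesis
      by (intro det_lower_triangular[of L]) (auto simp: parity_block_def path_adj_def)
  next
    case False
    with assms have "p = 1" by simp
    then show ?thesis
      by (intro det_upper_triangular[of _ L]) (auto simp: parity_block_def path_adj_def upper_triangular_def)
  qed
  also have "\<dots> = 1"
    using assms by (cases "p = 0") (auto simp: prod_list_diag_prod parity_block_def path_adj_def)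
  finally show ?thesis .
qed

lemma det_parity_block_path_adj_pow:
  "det (parity_block L (fmat_pow (2 * L) (path_adj (2 * L)) t) 0 (t mod 2)) = 1"
proof (induction t)
  case 0
  then show ?case by (simp add: parity_block_one)
next
  case (Suc t)
  let ?A = "path_adj (2 * L)"
  have "parity_block L (fmat_pow (2 * L) ?A (Suc t)) 0 (1 - t mod 2) =
      parity_block L (fmat_pow (2 * L) ?A t) 0 (t mod 2) * parity_block L ?A (t mod 2) (1 - t mod 2)"
    unfolding fmat_pow.simps(2)
    by (rule parity_block_mult) (auto intro: fmat_pow_path_adj_parity)
  moreover have "Suc t mod 2 = 1 - t mod 2"
    by presburger
  ultimately show ?case
    using Suc.IH det_parity_block_path_adj[of "t mod 2" L]
    by (simp add: det_mult[OF parity_block_carrier parity_block_carrier])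
qed

lemma parity_block_pow_mult_inv:
  assumes "odd t"
  shows "parity_block L (fmat_pow (2 * L) (path_adj (2 * L)) t) 0 1 *
    parity_block L (fmat_pow (2 * L) (path_adj_inv (2 * L)) t) 1 0 = 1\<^sub>m L"
proof -
  let ?At = "fmat_pow (2 * L) (path_adj (2 * L)) t" and ?Wt = "fmat_pow (2 * L) (path_adj_inv (2 * L)) t"
  have "parity_block L ?At 0 1 * parity_block L ?Wt 1 0 = parity_block L (fmat_mult (2 * L) ?At ?Wt) 0 0"
    using assms by (intro parity_block_mult[symmetric]) (auto intro: fmat_pow_path_adj_parity)
  also have "\<dots> = 1\<^sub>m L"
    by (simp add: fmat_pow_mult_pow_inverse path_adj_mult_inv parity_block_one)
  finally show ?thesis .
qed

section \<open>Complementary minors\<close>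

lemma det_permute_rows_cols:
  fixes B :: "'a :: comm_ring_1 mat"
  assumes B: "B \<in> carrier_mat n n" and P: "P permutes {0..<n}" and Q: "Q permutes {0..<n}"
  shows "det (mat n n (\<lambda>(i, j). B $$ (P i, Q j))) = signof P * signof Q * det B"
proof -
  define C where "C = mat n n (\<lambda>(i, j). B $$ (i, Q j))"
  have C: "C \<in> carrier_mat n n"
    by (simp add: C_def)
  have "transpose_mat C = mat n n (\<lambda>(i, j). transpose_mat B $$ (Q i, j))"
    by (rule eq_matI) (use B permutes_in_image[OF Q] in \<open>auto simp: C_def\<close>)
  then have "det C = signof Q * det B"
    using det_permute_rows[of "transpose_mat B" n Q] B Q det_transpose[OF C] det_transpose[OF B] by simp
  moreover have "mat n n (\<lambda>(i, j). B $$ (P i, Q j)) = mat n n (\<lambda>(i, j). C $$ (P i, j))"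
    by (rule eq_matI) (use permutes_in_image[OF P] in \<open>auto simp: C_def\<close>)
  ultimately show ?thesis
    using det_permute_rows[OF C P] by simp
qed

lemma permute_rows_cols_mult_eq_one:
  fixes B N :: "'a :: comm_ring_1 mat"
  assumes B: "B \<in> carrier_mat n n" and N: "N \<in> carrier_mat n n" and BN: "B * N = 1\<^sub>m n"
    and P: "P permutes {0..<n}" and Q: "Q permutes {0..<n}"
  shows "mat n n (\<lambda>(i, j). B $$ (P i, Q j)) * mat n n (\<lambda>(i, j). N $$ (Q i, P j)) = 1\<^sub>m n"
proof (rule eq_matI)
  fix i j assume "i < dim_row (1\<^sub>m n :: 'a mat)" "j < dim_col (1\<^sub>m n :: 'a mat)"
  then have ij: "i < n" "j < n" by auto
  have PQ: "P i < n" "P j < n" "Q l < n" if "l < n" for l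
    using permutes_in_image[OF P] permutes_in_image[OF Q] ij that by auto
  have "(mat n n (\<lambda>(i, j). B $$ (P i, Q j)) * mat n n (\<lambda>(i, j). N $$ (Q i, P j))) $$ (i, j) =
      (\<Sum>l\<in>{0..<n}. B $$ (P i, Q l) * N $$ (Q l, P j))"
    using ij PQ by (simp add: scalar_prod_def)
  also have "\<dots> = (\<Sum>l\<in>{0..<n}. B $$ (P i, l) * N $$ (l, P j))"
    using sum.permute[OF Q, of "\<lambda>l. B $$ (P i, l) * N $$ (l, P j)"] by (simp add: comp_def)
  also have "\<dots> = (B * N) $$ (P i, P j)"
    using B N PQ[OF ij(1)] by (simp add: scalar_prod_def)
  also have "\<dots> = 1\<^sub>m n $$ (i, j)"
    using BN PQ[OF ij(1)] ij permutes_inj[OF P] by (auto simp: inj_eq)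
  finally show "(mat n n (\<lambda>(i, j). B $$ (P i, Q j)) * mat n n (\<lambda>(i, j). N $$ (Q i, P j))) $$ (i, j) =
      1\<^sub>m n $$ (i, j)" .
qed auto

text \<open>Jacobi's theorem for a leading minor: with $N = B^{-1}$, multiplying $B$ on the right by
  the block matrix $[1, N_{12}; 0, N_{22}]$ gives $[B_{11}, 0; B_{21}, 1]$.\<close>
lemma det_leading_minor_eq:
  fixes B N :: "'a :: idom mat"
  assumes B: "B \<in> carrier_mat (k + m) (k + m)" and N: "N \<in> carrier_mat (k + m) (k + m)"
    and BN: "B * N = 1\<^sub>m (k + m)"
  shows "det (mat k k (\<lambda>(i, j). B $$ (i, j))) = det B * det (mat m m (\<lambda>(i, j). N $$ (k + i, k + j)))"
proof -
  define B11 where "B11 = mat k k (\<lambda>(i, j). B $$ (i, j))"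
  define N22 where "N22 = mat m m (\<lambda>(i, j). N $$ (k + i, k + j))"
  define X where "X = four_block_mat (1\<^sub>m k) (mat k m (\<lambda>(i, j). N $$ (i, k + j))) (0\<^sub>m m k) N22"
  define Y where "Y = four_block_mat B11 (0\<^sub>m k m) (mat m k (\<lambda>(i, j). B $$ (k + i, j))) (1\<^sub>m m)"
  have X: "X \<in> carrier_mat (k + m) (k + m)" and Y: "Y \<in> carrier_mat (k + m) (k + m)"
    by (simp_all add: X_def N22_def Y_def B11_def)
  have col_X: "col X j = (if j < k then col (1\<^sub>m (k + m)) j else col N j)" if "j < k + m" for j
    using that X N by (intro eq_vecI) (auto simp: X_def N22_def)
  have "B * X = Y"
  proof (rule eq_matI)
    fix i j assume "i < dim_row Y" "j < dim_col Y"
    then have ij: "i < k + m" "j < k + m" using Y by auto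
    show "(B * X) $$ (i, j) = Y $$ (i, j)"
    proof (cases "j < k")
      case True
      then have "(B * X) $$ (i, j) = (B * 1\<^sub>m (k + m)) $$ (i, j)"
        using ij B X col_X by simp
      with True ij B show ?thesis
        by (auto simp: Y_def B11_def)
    next
      case False
      then have "(B * X) $$ (i, j) = (B * N) $$ (i, j)"
        using ij B N X col_X by simp
      with False ij BN show ?thesis
        by (auto simp: Y_def B11_def)
    qed
  qed (use B X Y in auto)
  moreover have "det X = det N22" "det Y = det B11"
    unfolding X_def Y_def
    by (subst det_four_block_mat_lower_left_zero det_four_block_mat_upper_right_zero;
        auto simp: N22_def B11_def)+
  ultimately show ?thesis
    using det_mult[OF B X] unfolding B11_def N22_def by simp
qed

lemma det_complementary_minor:
  fixes B N :: "'a :: idom mat"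
  assumes B: "B \<in> carrier_mat (k + m) (k + m)" and N: "N \<in> carrier_mat (k + m) (k + m)"
    and BN: "B * N = 1\<^sub>m (k + m)"
    and P: "P permutes {0..<k + m}" and Q: "Q permutes {0..<k + m}"
  shows "det (mat k k (\<lambda>(i, j). B $$ (P i, Q j))) =
     signof P * signof Q * det B * det (mat m m (\<lambda>(i, j). N $$ (Q (k + i), P (k + j))))"
proof -
  let ?B = "mat (k + m) (k + m) (\<lambda>(i, j). B $$ (P i, Q j))"
  let ?N = "mat (k + m) (k + m) (\<lambda>(i, j). N $$ (Q i, P j))"
  have "det (mat k k (\<lambda>(i, j). ?B $$ (i, j))) = det ?B * det (mat m m (\<lambda>(i, j). ?N $$ (k + i, k + j)))"
    using permute_rows_cols_mult_eq_one[OF assms] by (intro det_leading_minor_eq) auto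
  moreover have "mat k k (\<lambda>(i, j). ?B $$ (i, j)) = mat k k (\<lambda>(i, j). B $$ (P i, Q j))"
    "mat m m (\<lambda>(i, j). ?N $$ (k + i, k + j)) = mat m m (\<lambda>(i, j). N $$ (Q (k + i), P (k + j)))"
    by (auto intro!: eq_matI)
  ultimately show ?thesis
    using det_permute_rows_cols[OF B P Q] by simp
qed

lemma strict_mono_on_lessThan_ge:
  fixes a :: "nat \<Rightarrow> nat"
  assumes "strict_mono_on {..<k} a" "i < k"
  shows "i \<le> a i"
  using assms(2)
proof (induction i)
  case (Suc i)
  then have "a i < a (Suc i)"
    using assms(1) by (auto simp: strict_mono_on_def)
  with Suc show ?case by simp
qed simp

lemma strict_mono_on_lessThan_unique:
  fixes a b :: "nat \<Rightarrow> nat"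
  assumes "strict_mono_on {..<m} a" "strict_mono_on {..<m} b" "a ` {..<m} = b ` {..<m}" "j < m"
  shows "a j = b j"
proof -
  have "sorted_wrt (<) (map a [0..<m])" "sorted_wrt (<) (map b [0..<m])"
    using assms(1,2) unfolding sorted_wrt_iff_nth_less strict_mono_on_def by auto
  moreover have "set (map a [0..<m]) = set (map b [0..<m])"
    using assms(3) by (simp add: atLeast0LessThan)
  ultimately have "map a [0..<m] = map b [0..<m]"
    using strict_sorted_equal by blast
  then show ?thesis
    using assms(4) by (metis add_0 diff_zero length_upt nth_map nth_upt)
qed

definition rotate_perm :: "nat \<Rightarrow> nat \<Rightarrow> nat \<Rightarrow> nat" where
  "rotate_perm k x = (\<lambda>i. if i = k then x else if k < i \<and> i \<le> x then i - 1 else i)"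

lemma rotate_perm_permutes_sign:
  assumes "k \<le> x" "x < n"
  shows "rotate_perm k x permutes {0..<n} \<and> sign (rotate_perm k x) = (-1) ^ (x - k)"
  using assms
proof (induction x rule: dec_induct)
  case base
  have "rotate_perm k k = id"
    by (auto simp: rotate_perm_def)
  then show ?case
    by (simp only: permutes_id sign_id diff_self_eq_0 power_0)
next
  case (step x)
  have rot: "rotate_perm k (Suc x) = Transposition.transpose x (Suc x) \<circ> rotate_perm k x"
    using step(1) by (intro ext) (auto simp: rotate_perm_def Transposition.transpose_def)
  have swap: "Transposition.transpose x (Suc x) permutes {0..<n}"
    using step by (intro permutes_swap_id) auto
  from step have IH: "rotate_perm k x permutes {0..<n}" "sign (rotate_perm k x) = (-1) ^ (x - k)"
    by auto
  have "rotate_perm k (Suc x) permutes {0..<n}"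
    unfolding rot by (rule permutes_compose[OF IH(1) swap])
  moreover have "sign (rotate_perm k (Suc x)) = (-1) ^ (Suc x - k)"
    unfolding rot
      sign_compose[OF permutes_imp_permutation[OF _ swap] permutes_imp_permutation[OF _ IH(1)], simplified]
    using step(1) IH(2) by (simp add: sign_swap_id Suc_diff_le)
  ultimately show ?case ..
qed

text \<open>For increasing $a$, \<open>shuffle_perm a k\<close> lists $a_0, \dots, a_{k-1}$ first and then the
  remaining points in increasing order.\<close>
primrec shuffle_perm :: "(nat \<Rightarrow> nat) \<Rightarrow> nat \<Rightarrow> nat \<Rightarrow> nat" where
  "shuffle_perm a 0 = id"
| "shuffle_perm a (Suc k) = shuffle_perm a k \<circ> rotate_perm k (a k)"

lemma shuffle_perm_permutes_sign:
  assumes "strict_mono_on {..<k} a" "a ` {..<k} \<subseteq> {..<n}"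
  shows "shuffle_perm a k permutes {0..<n} \<and> sign (shuffle_perm a k) = (-1) ^ (\<Sum>i<k. a i - i)"
  using assms
proof (induction k)
  case (Suc k)
  have "strict_mono_on {..<k} a" "a ` {..<k} \<subseteq> {..<n}"
    using Suc.prems by (auto simp: image_subset_iff intro: monotone_on_subset)
  with Suc.IH have IH: "shuffle_perm a k permutes {0..<n}" "sign (shuffle_perm a k) = (-1) ^ (\<Sum>i<k. a i - i)"
    by auto
  have rot: "rotate_perm k (a k) permutes {0..<n}" "sign (rotate_perm k (a k)) = (-1) ^ (a k - k)"
    using rotate_perm_permutes_sign[of k "a k" n] strict_mono_on_lessThan_ge[OF Suc.prems(1), of k] Suc.prems(2)
    by auto
  have "shuffle_perm a (Suc k) permutes {0..<n}"
    unfolding shuffle_perm.simps(2) by (rule permutes_compose[OF rot(1) IH(1)])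
  moreover have "sign (shuffle_perm a (Suc k)) = (-1) ^ (\<Sum>i<Suc k. a i - i)"
    unfolding shuffle_perm.simps(2)
      sign_compose[OF permutes_imp_permutation[OF _ IH(1)] permutes_imp_permutation[OF _ rot(1)], simplified]
    using IH(2) rot(2) by (simp add: power_add)
  ultimately show ?case ..
qed (simp add: permutes_id sign_id)

lemma shuffle_perm_fixes:
  assumes "strict_mono_on {..<k} a" "\<forall>j<k. a j < i"
  shows "shuffle_perm a k i = i"
  using assms
proof (induction k)
  case (Suc k)
  have "strict_mono_on {..<k} a"
    using Suc.prems(1) by (rule monotone_on_subset) auto
  moreover have "k \<le> a k"
    using Suc.prems(1) by (rule strict_mono_on_lessThan_ge) simp
  moreover have "a k < i"
    using Suc.prems(2) by simp
  ultimately show ?case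
    using Suc.IH Suc.prems(2) by (auto simp: rotate_perm_def)
qed simp

lemma shuffle_perm_prefix:
  assumes "strict_mono_on {..<k} a" "j < k"
  shows "shuffle_perm a k j = a j"
  using assms
proof (induction k)
  case (Suc k)
  have mono: "strict_mono_on {..<k} a"
    using Suc.prems(1) by (rule monotone_on_subset) auto
  show ?case
  proof (cases "j = k")
    case True
    have "\<forall>i<k. a i < a k"
      using Suc.prems(1) by (auto simp: strict_mono_on_def)
    with True mono show ?thesis
      by (simp add: rotate_perm_def shuffle_perm_fixes)
  next
    case False
    with Suc mono show ?thesis
      by (simp add: rotate_perm_def)
  qed
qed simp

lemma shuffle_perm_mono:
  assumes "strict_mono_on {..<k} a" "a ` {..<k} \<subseteq> {..<n}"
  shows "strict_mono_on {k..<n} (shuffle_perm a k)"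
  using assms
proof (induction k)
  case 0
  then show ?case by (simp add: strict_mono_on_def)
next
  case (Suc k)
  have "strict_mono_on {..<k} a" "a ` {..<k} \<subseteq> {..<n}"
    using Suc.prems by (auto simp: image_subset_iff intro: monotone_on_subset)
  with Suc.IH have IH: "strict_mono_on {k..<n} (shuffle_perm a k)"
    by blast
  have "a k < n"
    using Suc.prems(2) by auto
  show ?case
  proof (rule strict_mono_onI)
    fix i j assume ij: "i \<in> {Suc k..<n}" "j \<in> {Suc k..<n}" "i < j"
    then have "rotate_perm k (a k) i \<in> {k..<n}" "rotate_perm k (a k) j \<in> {k..<n}"
      "rotate_perm k (a k) i < rotate_perm k (a k) j"
      using \<open>a k < n\<close> by (auto simp: rotate_perm_def)
    then show "shuffle_perm a (Suc k) i < shuffle_perm a (Suc k) j"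
      using IH by (auto simp: strict_mono_on_def)
  qed
qed

lemma shuffle_perm_complement:
  assumes a: "strict_mono_on {..<k} a" "a ` {..<k} \<subseteq> {..<k + m}"
    and a': "strict_mono_on {..<m} a'" "a' ` {..<m} = {..<k + m} - a ` {..<k}" and "j < m"
  shows "shuffle_perm a k (k + j) = a' j"
proof (rule strict_mono_on_lessThan_unique[where a = "\<lambda>j. shuffle_perm a k (k + j)" and b = a'])
  let ?P = "shuffle_perm a k"
  have perm: "?P permutes {0..<k + m}"
    using shuffle_perm_permutes_sign[OF a] by simp
  then have inj: "inj_on ?P {0..<k + m}" and img: "?P ` {0..<k + m} = {0..<k + m}"
    by (rule permutes_inj_on, rule permutes_image)
  have "?P ` {..<k} = a ` {..<k}"
    using shuffle_perm_prefix[OF a(1)] by simp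
  moreover have "?P ` ({0..<k + m} - {..<k}) = ?P ` {0..<k + m} - ?P ` {..<k}"
    using inj by (rule inj_on_image_set_diff) auto
  moreover have "(\<lambda>j. ?P (k + j)) ` {..<m} = ?P ` ({0..<k + m} - {..<k})"
  proof -
    have "(\<lambda>j. k + j) ` {..<m} = {0..<k + m} - {..<k}"
      using image_add_atLeastLessThan[of k 0 m] by (auto simp: atLeast0LessThan add.commute)
    then show ?thesis by (simp flip: image_image)
  qed
  ultimately show "(\<lambda>j. ?P (k + j)) ` {..<m} = a' ` {..<m}"
    using img a'(2) by (simp add: atLeast0LessThan)
  show "strict_mono_on {..<m} (\<lambda>j. ?P (k + j))"
  proof (rule strict_mono_onI)
    fix i j :: nat assume "i \<in> {..<m}" "j \<in> {..<m}" "i < j"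
    then show "?P (k + i) < ?P (k + j)"
      using shuffle_perm_mono[OF a] by (simp add: strict_mono_on_def)
  qed
qed fact+

lemma sum_complement_enum:
  fixes a a' :: "nat \<Rightarrow> nat"
  assumes "inj_on a {..<k}" "a ` {..<k} \<subseteq> {..<n}" "inj_on a' {..<m}" "a' ` {..<m} = {..<n} - a ` {..<k}"
  shows "(\<Sum>i<k. a i) + (\<Sum>j<m. a' j) = (\<Sum>x<n. x)"
proof -
  have "(\<Sum>i<k. a i) + (\<Sum>j<m. a' j) = sum (\<lambda>x. x) (a ` {..<k}) + sum (\<lambda>x. x) (a' ` {..<m})"
    using assms(1,3) by (simp add: sum.reindex)
  also have "\<dots> = sum (\<lambda>x. x) (a ` {..<k} \<union> a' ` {..<m})"
    using assms(4) by (intro sum.union_disjoint[symmetric]) auto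
  also have "a ` {..<k} \<union> a' ` {..<m} = {..<n}"
    using assms(2,4) by auto
  finally show ?thesis .
qed

lemma sign_shuffle_perm:
  assumes a: "strict_mono_on {..<k} a" "a ` {..<k} \<subseteq> {..<k + m}"
    and a': "strict_mono_on {..<m} a'" "a' ` {..<m} = {..<k + m} - a ` {..<k}"
  shows "sign (shuffle_perm a k) = (-1) ^ ((\<Sum>j<m. a' j) + (\<Sum>i<k. i) + (\<Sum>x<k + m. x))"
proof -
  have "(\<Sum>i<k. a i - i) + (\<Sum>i<k. i) = (\<Sum>i<k. a i)"
    using strict_mono_on_lessThan_ge[OF a(1)] by (simp flip: sum.distrib)
  then have "(\<Sum>i<k. a i - i) + (\<Sum>i<k. i) + (\<Sum>j<m. a' j) = (\<Sum>x<k + m. x)"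
    using sum_complement_enum[OF strict_mono_on_imp_inj_on[OF a(1)] a(2)
        strict_mono_on_imp_inj_on[OF a'(1)] a'(2)]
    by simp
  moreover have "even x \<longleftrightarrow> even (y + z + w)" if "x + z + y = w" for x y z w :: nat
    using that by presburger
  ultimately have
    "even (\<Sum>i<k. a i - i) \<longleftrightarrow> even ((\<Sum>j<m. a' j) + (\<Sum>i<k. i) + (\<Sum>x<k + m. x))"
    by blast
  then show ?thesis
    using shuffle_perm_permutes_sign[OF a] by (simp add: minus_one_power_iff)
qed

lemma det_minor_eq_complementary_minor:
  fixes B N :: "'a :: idom mat"
  assumes B: "B \<in> carrier_mat (k + m) (k + m)" and N: "N \<in> carrier_mat (k + m) (k + m)"
    and BN: "B * N = 1\<^sub>m (k + m)" and "det B = 1"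
    and a: "strict_mono_on {..<k} a" "a ` {..<k} \<subseteq> {..<k + m}"
    and a': "strict_mono_on {..<m} a'" "a' ` {..<m} = {..<k + m} - a ` {..<k}"
    and b: "strict_mono_on {..<k} b" "b ` {..<k} \<subseteq> {..<k + m}"
    and b': "strict_mono_on {..<m} b'" "b' ` {..<m} = {..<k + m} - b ` {..<k}"
  shows "det (mat k k (\<lambda>(i, j). B $$ (a i, b j))) =
    (-1) ^ (\<Sum>j<m. a' j + b' j) * det (mat m m (\<lambda>(i, j). N $$ (b' i, a' j)))"
proof -
  let ?P = "shuffle_perm a k" and ?Q = "shuffle_perm b k"
  have "det (mat k k (\<lambda>(i, j). B $$ (?P i, ?Q j))) =
      signof ?P * signof ?Q * det B * det (mat m m (\<lambda>(i, j). N $$ (?Q (k + i), ?P (k + j))))"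
    using shuffle_perm_permutes_sign[OF a] shuffle_perm_permutes_sign[OF b]
    by (intro det_complementary_minor[OF B N BN]) auto
  moreover have "mat k k (\<lambda>(i, j). B $$ (?P i, ?Q j)) = mat k k (\<lambda>(i, j). B $$ (a i, b j))"
    by (rule eq_matI) (auto simp: shuffle_perm_prefix[OF a(1)] shuffle_perm_prefix[OF b(1)])
  moreover have "mat m m (\<lambda>(i, j). N $$ (?Q (k + i), ?P (k + j))) = mat m m (\<lambda>(i, j). N $$ (b' i, a' j))"
    by (rule eq_matI) (auto simp: shuffle_perm_complement[OF a a'] shuffle_perm_complement[OF b b'])
  moreover have "signof ?P * signof ?Q = ((-1) ^ (\<Sum>j<m. a' j + b' j) :: 'a)"
  proof -
    have "signof ?P * signof ?Q =
        ((-1) ^ ((\<Sum>j<m. a' j + b' j) + 2 * ((\<Sum>i<k. i) + (\<Sum>x<k + m. x))) :: 'a)"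
      unfolding sign_shuffle_perm[OF a a'] sign_shuffle_perm[OF b b'] of_int_mult[symmetric] power_add[symmetric]
      by (simp add: sum.distrib mult_2 ac_simps)
    then show ?thesis
      by (simp add: power_add power_mult)
  qed
  ultimately show ?thesis
    using \<open>det B = 1\<close> by simp
qed

lemma complement_enum_shift:
  fixes r r' :: "nat \<Rightarrow> nat"
  assumes r: "strict_mono_on {..<k} r" "r ` {..<k} \<subseteq> {1..n}"
    and r': "strict_mono_on {..<m} r'" "r' ` {..<m} = {1..n} - r ` {..<k}"
  shows "strict_mono_on {..<k} (\<lambda>i. r i - 1)" "(\<lambda>i. r i - 1) ` {..<k} \<subseteq> {..<n}"
    and "strict_mono_on {..<m} (\<lambda>i. r' i - 1)" "(\<lambda>i. r' i - 1) ` {..<m} = {..<n} - (\<lambda>i. r i - 1) ` {..<k}"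
proof -
  have pos: "1 \<le> r i" if "i < k" for i
    using r(2) that by auto
  have pos': "1 \<le> r' j" if "j < m" for j
    using r'(2) that by auto
  have pred: "(\<lambda>x::nat. x - 1) ` {1..n} = {..<n}"
    by (auto simp: image_iff intro!: bexI[of _ "Suc _"])
  have inj: "inj_on (\<lambda>x::nat. x - 1) {1..n}"
    by (auto simp: inj_on_def)
  show "strict_mono_on {..<k} (\<lambda>i. r i - 1)"
    using r(1) pos by (auto simp: strict_mono_on_def diff_less_mono)
  show "strict_mono_on {..<m} (\<lambda>i. r' i - 1)"
    using r'(1) pos' by (auto simp: strict_mono_on_def diff_less_mono)
  show "(\<lambda>i. r i - 1) ` {..<k} \<subseteq> {..<n}"
    using r(2) pred by (fastforce simp flip: image_image)
  have "(\<lambda>i. r' i - 1) ` {..<m} = (\<lambda>x. x - 1) ` ({1..n} - r ` {..<k})"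
    unfolding r'(2)[symmetric] image_image ..
  also have "\<dots> = (\<lambda>x. x - 1) ` {1..n} - (\<lambda>x. x - 1) ` r ` {..<k}"
    using inj by (rule inj_on_image_set_diff) (use r(2) in auto)
  also have "\<dots> = {..<n} - (\<lambda>i. r i - 1) ` {..<k}"
    unfolding pred image_image ..
  finally show "(\<lambda>i. r' i - 1) ` {..<m} = {..<n} - (\<lambda>i. r i - 1) ` {..<k}" .
qed

lemma C_pos_eq_parity_block:
  assumes "u \<in> {1..L}" "v \<in> {1..L}"
  shows "C (2 * L - 1) (int t) (2 * u - 2) (2 * v - 1) =
    parity_block L (fmat_pow (2 * L) (path_adj (2 * L)) t) 0 1 $$ (u - 1, v - 1)"
proof -
  have "2 * u - 2 = 2 * (u - 1)" "2 * v - 1 = 2 * (v - 1) + 1" "u - 1 < L" "v - 1 < L"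
    "odd (2 * L - 1)" "2 * (u - 1) \<le> 2 * L - 1" "2 * (v - 1) + 1 \<le> 2 * L - 1"
    using assms by auto
  then show ?thesis
    using C_eq_path_adj_zpow[of "2 * L - 1" "2 * (u - 1)" "2 * (v - 1) + 1" "int t"]
    by (simp add: path_adj_zpow_def parity_block_def)
qed

lemma C_neg_eq_parity_block:
  assumes "u \<in> {1..L}" "v \<in> {1..L}"
  shows "C (2 * L - 1) (- int t) (2 * u - 2) (2 * v - 1) =
    parity_block L (fmat_pow (2 * L) (path_adj_inv (2 * L)) t) 1 0 $$ (v - 1, u - 1)"
proof -
  have "2 * u - 2 = 2 * (u - 1)" "2 * v - 1 = 2 * (v - 1) + 1" "u - 1 < L" "v - 1 < L"
    "odd (2 * L - 1)" "2 * (u - 1) \<le> 2 * L - 1" "2 * (v - 1) + 1 \<le> 2 * L - 1"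
    using assms by auto
  moreover have "fmat_pow (2 * L) (path_adj_inv (2 * L)) t (2 * (u - 1)) (2 * (v - 1) + 1) =
      fmat_pow (2 * L) (path_adj_inv (2 * L)) t (2 * (v - 1) + 1) (2 * (u - 1))"
    by (rule fmat_pow_path_adj_inv_symmetric)
  ultimately show ?thesis
    using C_eq_path_adj_zpow[of "2 * L - 1" "2 * (u - 1)" "2 * (v - 1) + 1" "- int t"]
    by (cases "t = 0") (simp_all add: path_adj_zpow_def parity_block_def)
qed

lemma minus_one_power_sum_pred:
  fixes a b :: "nat \<Rightarrow> nat"
  assumes "\<And>j. j < m \<Longrightarrow> 1 \<le> a j" "\<And>j. j < m \<Longrightarrow> 1 \<le> b j"
  shows "(-1) ^ (\<Sum>j<m. (a j - 1) + (b j - 1)) = ((-1) ^ (\<Sum>j<m. a j + b j) :: 'a :: ring_1)"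
proof -
  have "(\<Sum>j<m. a j + b j) = (\<Sum>j<m. (a j - 1) + (b j - 1) + 2)"
  proof (intro sum.cong refl)
    fix j assume "j \<in> {..<m}"
    then have "1 \<le> a j" "1 \<le> b j"
      using assms by auto
    then show "a j + b j = (a j - 1) + (b j - 1) + 2"
      by simp
  qed
  then have "(\<Sum>j<m. a j + b j) = (\<Sum>j<m. (a j - 1) + (b j - 1)) + 2 * m"
    by (simp only: sum.distrib) simp
  then show ?thesis
    by (simp add: power_add power_mult)
qed

theorem theorem24:
  fixes n k m :: nat and r s rb sb :: "nat \<Rightarrow> nat"
  assumes "n \<ge> 1" "k \<ge> 1" "m \<ge> 1"
    and "strict_mono_on {..<k} r" "r ` {..<k} \<subseteq> {1..k+m}"
    and "strict_mono_on {..<k} s" "s ` {..<k} \<subseteq> {1..k+m}"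
    and "strict_mono_on {..<m} rb" "rb ` {..<m} = {1..k+m} - r ` {..<k}"
    and "strict_mono_on {..<m} sb" "sb ` {..<m} = {1..k+m} - s ` {..<k}"
  shows "det (mat k k (\<lambda>(i, j). C (2*k+2*m-1) (2*int n - 1) (2 * r i - 2) (2 * s j - 1)))
       = (-1) ^ (\<Sum>i<m. rb i + sb i) *
         det (mat m m (\<lambda>(i, j). C (2*k+2*m-1) (- 2*int n + 1) (2 * rb i - 2) (2 * sb j - 1)))"
proof -
  define L where "L = k + m"
  define t where "t = 2 * n - 1"
  let ?B = "parity_block L (fmat_pow (2 * L) (path_adj (2 * L)) t) 0 1"
  let ?N = "parity_block L (fmat_pow (2 * L) (path_adj_inv (2 * L)) t) 1 0"
  have "odd t" and args: "2 * k + 2 * m - 1 = 2 * L - 1" "2 * int n - 1 = int t" "- 2 * int n + 1 = - int t"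
    using \<open>n \<ge> 1\<close> by (auto simp: L_def t_def)
  have "C (2 * L - 1) (int t) (2 * r i - 2) (2 * s j - 1) = ?B $$ (r i - 1, s j - 1)" if "i < k" "j < k" for i j
    using that assms(5,7)[folded L_def] by (intro C_pos_eq_parity_block) auto
  then have "mat k k (\<lambda>(i, j). C (2*k+2*m-1) (2*int n - 1) (2 * r i - 2) (2 * s j - 1)) =
      mat k k (\<lambda>(i, j). ?B $$ (r i - 1, s j - 1))"
    unfolding args by (intro eq_matI) simp_all
  moreover have "C (2 * L - 1) (- int t) (2 * rb i - 2) (2 * sb j - 1) = ?N $$ (sb j - 1, rb i - 1)"
    if "i < m" "j < m" for i j
    using that assms(9,11)[folded L_def] by (intro C_neg_eq_parity_block) auto
  then have "mat m m (\<lambda>(i, j). C (2*k+2*m-1) (- 2*int n + 1) (2 * rb i - 2) (2 * sb j - 1)) =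
      transpose_mat (mat m m (\<lambda>(i, j). ?N $$ (sb i - 1, rb j - 1)))"
    unfolding args by (intro eq_matI) simp_all
  moreover have "det (mat k k (\<lambda>(i, j). ?B $$ (r i - 1, s j - 1))) =
      (-1) ^ (\<Sum>j<m. (rb j - 1) + (sb j - 1)) * det (mat m m (\<lambda>(i, j). ?N $$ (sb i - 1, rb j - 1)))"
    using complement_enum_shift[OF assms(4,5,8,9), folded L_def]
      complement_enum_shift[OF assms(6,7,10,11), folded L_def]
      parity_block_pow_mult_inv[OF \<open>odd t\<close>] det_parity_block_path_adj_pow[of L t] \<open>odd t\<close>
    by (intro det_minor_eq_complementary_minor[of _ k m, folded L_def]) (simp_all add: odd_iff_mod_2_eq_one)
  moreover have "(-1) ^ (\<Sum>j<m. (rb j - 1) + (sb j - 1)) = ((-1) ^ (\<Sum>j<m. rb j + sb j) :: real)"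
    using assms(9,11) by (intro minus_one_power_sum_pred) auto
  ultimately show ?thesis
    by (simp add: det_transpose[where n = m])
qed

end
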